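(* Let $\xi$ be a positive integer-valued random variable with $\xi\ge1$ almost surely, let $\alpha\in(0,1]$ with $\mathbb{E}[\xi]\alpha>1$, and let $q$ be the extinction probability of a Galton--Watson process whose offspring distribution $\zeta$ is $\mathrm{Bin}(\xi,\alpha)$ (i.e., given $\xi$, $\zeta$ is binomial with parameters $\xi$ and $\alpha$). Then $$q\le\frac{1-\alpha}{1-\mathbb{E}\big[(1-\alpha)^\xi\big]-\mathbb{E}\big[\xi\alpha(1-\alpha)^{\xi-1}\big]}.$$ *)

theory Defs
  imports "HOL-Probability.Probability"
begin

definition bin_mix_pmf :: "nat pmf \<Rightarrow> real \<Rightarrow> nat pmf" where
  "bin_mix_pmf \<xi> \<alpha> = bind_pmf \<xi> (\<lambda>n. binomial_pmf n \<alpha>)"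

primrec iid_sum_pmf :: "nat pmf \<Rightarrow> nat \<Rightarrow> nat pmf" where
  "iid_sum_pmf p 0 = return_pmf 0"
| "iid_sum_pmf p (Suc k) = bind_pmf p (\<lambda>a. map_pmf (\<lambda>b. a + b) (iid_sum_pmf p k))"

text \<open>Law of the generation size Z_n of a Galton--Watson process started from Z_0 = 1
  with offspring law p: Z_(n+1) is the sum of Z_n independent copies of the offspring variable.\<close>
primrec gw_pmf :: "nat pmf \<Rightarrow> nat \<Rightarrow> nat pmf" where
  "gw_pmf p 0 = return_pmf 1"
| "gw_pmf p (Suc n) = bind_pmf (gw_pmf p n) (iid_sum_pmf p)"

text \<open>Extinction probability: P(exists n. Z_n = 0) = lim_n P(Z_n = 0) (increasing events).\<close>
definition extinction_prob :: "nat pmf \<Rightarrow> real" where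
  "extinction_prob p = (SUP n. pmf (gw_pmf p n) 0)"

end

theory Submission imports Defs begin

text \<open>The extinction probability is the least fixed point of the offspring generating
  function \<open>f\<close> on \<open>[0,1]\<close>, so \<open>q \<le> r\<close> as soon as \<open>f r \<le> r\<close>. Since \<open>s\<^sup>k \<le> s\<^sup>2\<close> for \<open>k \<ge> 2\<close>,
  \<open>f s \<le> p\<^sub>0 + p\<^sub>1 s + (1 - p\<^sub>0 - p\<^sub>1) s\<^sup>2\<close>, and this quadratic bound has the fixed point
  \<open>r = p\<^sub>0 / (1 - p\<^sub>0 - p\<^sub>1)\<close>. For the binomial mixture, \<open>p\<^sub>0 = E[(1-\<alpha>)\<^sup>\<xi>] \<le> 1 - \<alpha>\<close> because
  \<open>\<xi> \<ge> 1\<close>, and supercriticality rules out \<open>p\<^sub>0 + p\<^sub>1 = 1\<close>.\<close>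

definition pgf :: "nat pmf \<Rightarrow> real \<Rightarrow> real" where
  "pgf p s = measure_pmf.expectation p (\<lambda>k. s ^ k)"

lemma integrable_power_pmf:
  fixes p :: "nat pmf" and s :: real
  assumes "0 \<le> s" "s \<le> 1"
  shows "integrable (measure_pmf p) (\<lambda>k. s ^ k)"
  using measure_pmf.integrable_const_bound[where M=p and f="\<lambda>k. s ^ k" and B=1]
  by (auto simp: assms power_le_one)

lemma pgf_nonneg: "0 \<le> s \<Longrightarrow> 0 \<le> pgf p s"
  unfolding pgf_def by (rule integral_nonneg_AE) auto

lemma pgf_mono: "0 \<le> s \<Longrightarrow> s \<le> t \<Longrightarrow> t \<le> 1 \<Longrightarrow> pgf p s \<le> pgf p t"
  unfolding pgf_def by (intro integral_mono integrable_power_pmf power_mono) auto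

lemma nn_integral_power_eq_pgf:
  assumes "0 \<le> s" "s \<le> 1"
  shows "(\<integral>\<^sup>+ k. ennreal (s ^ k) \<partial>measure_pmf p) = ennreal (pgf p s)"
  unfolding pgf_def
  by (rule nn_integral_eq_integral) (auto simp: integrable_power_pmf assms)

lemma nn_integral_power_iid_sum_pmf:
  fixes s :: real
  assumes "0 \<le> s"
  shows "(\<integral>\<^sup>+ m. ennreal (s ^ m) \<partial>measure_pmf (iid_sum_pmf p k))
       = (\<integral>\<^sup>+ m. ennreal (s ^ m) \<partial>measure_pmf p) ^ k"
proof (induction k)
  case 0
  then show ?case by simp
next
  case (Suc k)
  have "(\<integral>\<^sup>+ m. ennreal (s ^ m) \<partial>measure_pmf (iid_sum_pmf p (Suc k)))
      = (\<integral>\<^sup>+ a. \<integral>\<^sup>+ b. ennreal (s ^ a) * ennreal (s ^ b)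
            \<partial>measure_pmf (iid_sum_pmf p k) \<partial>measure_pmf p)"
    by (simp add: power_add ennreal_mult assms)
  also have "\<dots> = (\<integral>\<^sup>+ a. ennreal (s ^ a) * (\<integral>\<^sup>+ m. ennreal (s ^ m) \<partial>measure_pmf p) ^ k
                    \<partial>measure_pmf p)"
    by (simp add: nn_integral_cmult Suc)
  also have "\<dots> = (\<integral>\<^sup>+ m. ennreal (s ^ m) \<partial>measure_pmf p) ^ Suc k"
    by (simp add: nn_integral_multc mult.commute)
  finally show ?case .
qed

lemma nn_integral_power_gw_pmf_le:
  assumes "0 \<le> s" "s \<le> r" "r \<le> 1" "pgf p r \<le> r"
  shows "(\<integral>\<^sup>+ k. ennreal (s ^ k) \<partial>measure_pmf (gw_pmf p n)) \<le> ennreal r"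
  using assms(1,2)
proof (induction n arbitrary: s)
  case 0
  then show ?case by simp
next
  case (Suc n)
  have "pgf p s \<le> r"
    using pgf_mono[of s r p] Suc.prems assms by linarith
  have "(\<integral>\<^sup>+ k. ennreal (s ^ k) \<partial>measure_pmf (gw_pmf p (Suc n)))
      = (\<integral>\<^sup>+ m. ennreal (pgf p s ^ m) \<partial>measure_pmf (gw_pmf p n))"
  proof -
    have "(\<integral>\<^sup>+ k. ennreal (s ^ k) \<partial>measure_pmf (iid_sum_pmf p m)) = ennreal (pgf p s ^ m)" for m
      using Suc.prems assms unfolding nn_integral_power_iid_sum_pmf[OF \<open>0 \<le> s\<close>]
      by (simp add: nn_integral_power_eq_pgf ennreal_power pgf_nonneg)
    then show ?thesis
      by simp
  qed
  also have "\<dots> \<le> ennreal r"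
    using Suc.IH \<open>pgf p s \<le> r\<close> pgf_nonneg Suc.prems by blast
  finally show ?case .
qed

lemma pmf_gw_pmf_0_le:
  assumes "0 \<le> r" "r \<le> 1" "pgf p r \<le> r"
  shows "pmf (gw_pmf p n) 0 \<le> r"
proof -
  have "(\<lambda>k. ennreal ((0::real) ^ k)) = indicator {0}"
    by (auto simp: fun_eq_iff split: split_indicator)
  then have "ennreal (pmf (gw_pmf p n) 0)
           = (\<integral>\<^sup>+ k. ennreal ((0::real) ^ k) \<partial>measure_pmf (gw_pmf p n))"
    by (simp add: emeasure_pmf_single)
  also have "\<dots> \<le> ennreal r"
    using assms by (intro nn_integral_power_gw_pmf_le) auto
  finally show ?thesis
    using assms by simp
qed

lemma extinction_prob_le_fixed_point:
  assumes "0 \<le> r" "r \<le> 1" "pgf p r \<le> r"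
  shows "extinction_prob p \<le> r"
  unfolding extinction_prob_def
  by (rule cSUP_least) (use pmf_gw_pmf_0_le[OF assms] in auto)

lemma extinction_prob_le_1: "extinction_prob p \<le> 1"
  unfolding extinction_prob_def by (rule cSUP_least) (auto simp: pmf_le_1)

lemma power_le_quadratic:
  fixes r :: real
  assumes "0 \<le> r" "r \<le> 1"
  shows "r ^ k \<le> r\<^sup>2 + (1 - r\<^sup>2) * indicator {0} k + (r - r\<^sup>2) * indicator {1} k"
proof -
  consider "k = 0" | "k = 1" | "k \<ge> 2"
    by linarith
  then show ?thesis
  proof cases
    case 3
    then have "r ^ k \<le> r\<^sup>2"
      using assms by (intro power_decreasing) auto
    with 3 show ?thesis by simp
  qed simp_all
qed

lemma pgf_le_quadratic:
  fixes r :: real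
  assumes "0 \<le> r" "r \<le> 1"
  shows "pgf p r \<le> r\<^sup>2 + (1 - r\<^sup>2) * pmf p 0 + (r - r\<^sup>2) * pmf p 1"
proof -
  have ind: "integrable (measure_pmf p) (\<lambda>k. c * indicator {a} k :: real)" for a c
    using measure_pmf.integrable_const_bound[where M=p and f="indicator {a} :: _ \<Rightarrow> real" and B=1]
    by (auto split: split_indicator)
  have "pgf p r \<le> measure_pmf.expectation p
          (\<lambda>k. r\<^sup>2 + (1 - r\<^sup>2) * indicator {0} k + (r - r\<^sup>2) * indicator {1} k)"
    unfolding pgf_def using assms
    by (intro integral_mono integrable_power_pmf power_le_quadratic
        Bochner_Integration.integrable_add ind) auto
  also have "\<dots> = r\<^sup>2 + (1 - r\<^sup>2) * pmf p 0 + (r - r\<^sup>2) * pmf p 1"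
    using ind[of "1 - r\<^sup>2" 0] ind[of "r - r\<^sup>2" 1]
    by (simp add: Bochner_Integration.integral_add measure_pmf_single del: insert_iff)
  finally show ?thesis .
qed

lemma extinction_prob_le_ratio:
  assumes "pmf p 0 + pmf p 1 < 1"
  shows "extinction_prob p \<le> pmf p 0 / (1 - pmf p 0 - pmf p 1)"
proof -
  define D where "D = 1 - pmf p 0 - pmf p 1"
  define r where "r = pmf p 0 / D"
  have "D > 0" "0 \<le> r"
    using assms by (auto simp: D_def r_def)
  have "r * D = pmf p 0"
    using \<open>D > 0\<close> by (simp add: r_def)
  show ?thesis
  proof (cases "r \<le> 1")
    case True
    have "pgf p r \<le> r\<^sup>2 + (1 - r\<^sup>2) * pmf p 0 + (r - r\<^sup>2) * pmf p 1"
      using \<open>0 \<le> r\<close> True by (rule pgf_le_quadratic)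
    also have "\<dots> = r"
    proof -
      have "r\<^sup>2 + (1 - r\<^sup>2) * pmf p 0 + (r - r\<^sup>2) * pmf p 1 = r * (r * D) + pmf p 0 + r * pmf p 1"
        by (simp add: D_def algebra_simps power2_eq_square)
      also have "\<dots> = r * D + r * pmf p 0 + r * pmf p 1"
        using \<open>r * D = pmf p 0\<close> by simp
      also have "\<dots> = r"
        by (simp add: D_def algebra_simps)
      finally show ?thesis .
    qed
    finally have "extinction_prob p \<le> r"
      using \<open>0 \<le> r\<close> True by (intro extinction_prob_le_fixed_point)
    then show ?thesis
      by (simp add: r_def D_def)
  next
    case False
    then show ?thesis
      using extinction_prob_le_1[of p] by (simp add: r_def D_def)
  qed
qed

lemma pmf_bin_mix_pmf_0:
  "0 \<le> \<alpha> \<Longrightarrow> \<alpha> \<le> 1 \<Longrightarrow>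
    pmf (bin_mix_pmf \<xi> \<alpha>) 0 = measure_pmf.expectation \<xi> (\<lambda>n. (1 - \<alpha>) ^ n)"
  unfolding bin_mix_pmf_def pmf_bind by simp

lemma pmf_bin_mix_pmf_1:
  "0 \<le> \<alpha> \<Longrightarrow> \<alpha> \<le> 1 \<Longrightarrow>
    pmf (bin_mix_pmf \<xi> \<alpha>) 1 = measure_pmf.expectation \<xi> (\<lambda>n. real n * \<alpha> * (1 - \<alpha>) ^ (n - 1))"
  unfolding bin_mix_pmf_def pmf_bind by simp

lemma pmf_bin_mix_pmf_0_le:
  assumes pos: "\<forall>n\<in>set_pmf \<xi>. n \<ge> 1" and "0 \<le> \<alpha>" "\<alpha> \<le> 1"
  shows "pmf (bin_mix_pmf \<xi> \<alpha>) 0 \<le> 1 - \<alpha>"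
proof -
  have "measure_pmf.expectation \<xi> (\<lambda>n. (1 - \<alpha>) ^ n) \<le> measure_pmf.expectation \<xi> (\<lambda>n. 1 - \<alpha>)"
  proof (rule integral_mono_AE)
    show "integrable (measure_pmf \<xi>) (\<lambda>n. (1 - \<alpha>) ^ n)"
      using assms by (intro integrable_power_pmf) auto
    show "AE n in measure_pmf \<xi>. (1 - \<alpha>) ^ n \<le> 1 - \<alpha>"
      unfolding AE_measure_pmf_iff using assms
      by (auto intro!: power_decreasing[where n=1, simplified])
  qed simp
  then show ?thesis
    using assms by (simp add: pmf_bin_mix_pmf_0)
qed

lemma set_pmf_subset_if_pmf_add_ge_1:
  assumes "1 \<le> pmf p a + pmf p b" "a \<noteq> b"
  shows "set_pmf p \<subseteq> {a, b}"
proof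
  fix x
  assume "x \<in> set_pmf p"
  show "x \<in> {a, b}"
  proof (rule ccontr)
    assume "x \<notin> {a, b}"
    then have "pmf p a + pmf p b + pmf p x = measure (measure_pmf p) {a, b, x}"
      using assms by (auto simp: measure_measure_pmf_finite)
    also have "\<dots> \<le> 1"
      by simp
    finally show False
      using assms pmf_positive[OF \<open>x \<in> set_pmf p\<close>] by linarith
  qed
qed

lemma set_pmf_subset_set_pmf_bin_mix_pmf:
  assumes "0 < \<alpha>" "\<alpha> \<le> 1"
  shows "set_pmf \<xi> \<subseteq> set_pmf (bin_mix_pmf \<xi> \<alpha>)"
proof
  fix n
  assume "n \<in> set_pmf \<xi>"
  moreover have "n \<in> set_pmf (binomial_pmf n \<alpha>)"
    using assms by (simp add: set_pmf_iff)
  ultimately show "n \<in> set_pmf (bin_mix_pmf \<xi> \<alpha>)"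
    unfolding bin_mix_pmf_def by auto
qed

lemma pmf_bin_mix_pmf_0_add_1_less_1:
  assumes pos: "\<forall>n\<in>set_pmf \<xi>. n \<ge> 1"
    and \<alpha>: "0 < \<alpha>" "\<alpha> \<le> 1"
    and supercrit: "(\<integral>\<^sup>+ n. ennreal (real n) \<partial>measure_pmf \<xi>) * ennreal \<alpha> > 1"
  shows "pmf (bin_mix_pmf \<xi> \<alpha>) 0 + pmf (bin_mix_pmf \<xi> \<alpha>) 1 < 1"
proof (rule ccontr)
  assume "\<not> ?thesis"
  then have "set_pmf (bin_mix_pmf \<xi> \<alpha>) \<subseteq> {0, 1}"
    by (intro set_pmf_subset_if_pmf_add_ge_1) auto
  with pos set_pmf_subset_set_pmf_bin_mix_pmf[OF \<alpha>] have "set_pmf \<xi> \<subseteq> {1}"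
    by fastforce
  then have "(\<integral>\<^sup>+ n. ennreal (real n) \<partial>measure_pmf \<xi>) = (\<integral>\<^sup>+ n. 1 \<partial>measure_pmf \<xi>)"
    by (intro nn_integral_cong_AE) (auto simp: AE_measure_pmf_iff)
  with supercrit \<alpha> show False
    by simp
qed

theorem lemma7:
  fixes \<xi> :: "nat pmf" and \<alpha> :: real
  assumes pos: "\<forall>n\<in>set_pmf \<xi>. n \<ge> 1"
    and \<alpha>: "0 < \<alpha>" "\<alpha> \<le> 1"
    and supercrit: "(\<integral>\<^sup>+ n. ennreal (real n) \<partial>measure_pmf \<xi>) * ennreal \<alpha> > 1"
  shows "extinction_prob (bin_mix_pmf \<xi> \<alpha>) \<le>
    (1 - \<alpha>) / (1 - measure_pmf.expectation \<xi> (\<lambda>n. (1 - \<alpha>) ^ n)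
                 - measure_pmf.expectation \<xi> (\<lambda>n. real n * \<alpha> * (1 - \<alpha>) ^ (n - 1)))"
proof -
  let ?p = "bin_mix_pmf \<xi> \<alpha>"
  have nondeg: "pmf ?p 0 + pmf ?p 1 < 1"
    using pmf_bin_mix_pmf_0_add_1_less_1[OF pos \<alpha> supercrit] .
  have "extinction_prob ?p \<le> pmf ?p 0 / (1 - pmf ?p 0 - pmf ?p 1)"
    using nondeg by (rule extinction_prob_le_ratio)
  also have "\<dots> \<le> (1 - \<alpha>) / (1 - pmf ?p 0 - pmf ?p 1)"
    using nondeg pmf_bin_mix_pmf_0_le[OF pos] \<alpha> by (intro divide_right_mono) auto
  finally show ?thesis
    unfolding pmf_bin_mix_pmf_0[OF less_imp_le[OF \<alpha>(1)] \<alpha>(2)]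
      pmf_bin_mix_pmf_1[OF less_imp_le[OF \<alpha>(1)] \<alpha>(2)] .
qed

end
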